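(* Let $G=\vec{C}_5^{1,2}$ and let $\mathbb K$ be a field of characteristic $0$. Then for every $n\ge 1$, $\dim_{\mathbb K}\Omega_n(G;\mathbb K)=10$, and a basis of $\Omega_n(G;\mathbb K)$ is given by the ten elements $\{\alpha_a^{(n)},\beta_a^{(n)}\}_{a\in\mathbb Z_5}$, where \[ \alpha_a^{(n)}=e_{a,(a+1),(a+2),\ldots,(a+n)},\qquad \beta_a^{(n)}=\sum_{j=1}^n(-1)^{n-j}\,e_{a,a+1,\ldots,a+j-1,a+j+1,a+j+2,\ldots,a+n+1}, \] all vertex labels being read modulo $5$.
   Context: GLMY path complex. Let $\mathbb K$ be a field of characteristic $0$ and $V$ a finite set. An elementary $n$-path is a sequence $(v_0,\dots,v_n)$ of vertices, written $e_{v_0v_1\cdots v_n}$; $\Lambda_n(V)$ is the $\mathbb K$-span of elementary $n$-paths, with boundary $\partial e_{v_0\cdots v_n}=\sum_{j=0}^n(-1)^j e_{v_0\cdots\widehat{v_j}\cdots v_n}$. The regular path space $R_n(V)$ is the quotient of $\Lambda_n(V)$ by the span of elementary paths with $v_{k-1}=v_k$ for some $k$ (such paths are identified with $0$); $\partial$ descends to $R_*$. For a finite digraph $G=(V,E)$ without loops, $A_n(G)\subset R_n(V)$ is the span of elementary paths $e_{v_0\cdots v_n}$ with $(v_k\to v_{k+1})\in E$ for all $k$ (allowed paths). Set $\Omega_0=A_0$, $\Omega_1=A_1$, and $\Omega_n(G)=\{u\in A_n(G):\partial u\in A_{n-1}(G)\}$ for $n\ge 2$. Then $(\Omega_*(G),\partial)$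 is a chain complex (the path complex) and its homology $H_n^{\mathrm{path}}(G;\mathbb K)$ is the path homology. Circulant digraph: for $n\ge 3$ and $S\subset\mathbb Z_n$ with $0\notin S$, $\vec{C}_n^S$ has vertex set $\mathbb Z_n$ and an arrow $a\to a+s$ for every $a\in\mathbb Z_n$, $s\in S$; $\vec C_n^{1,2}$ means $S=\{1,2\}$. *)

theory Defs
  imports Complex_Main "HOL-Library.Function_Algebras"
begin

text \<open>Chains are K-valued coefficient functions on vertex lists (elementary paths).
  A digraph is given by a finite vertex set V and an arrow set E.\<close>

definition fscale :: "'k::field \<Rightarrow> ('b \<Rightarrow> 'k) \<Rightarrow> ('b \<Rightarrow> 'k)" where
  "fscale c f = (\<lambda>x. c * f x)"

definition regular_path :: "'v list \<Rightarrow> bool" where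
  "regular_path xs \<longleftrightarrow> (\<forall>i. Suc i < length xs \<longrightarrow> xs ! i \<noteq> xs ! Suc i)"

definition allowed_path :: "('v \<times> 'v) set \<Rightarrow> 'v list \<Rightarrow> bool" where
  "allowed_path E xs \<longleftrightarrow> (\<forall>i. Suc i < length xs \<longrightarrow> (xs ! i, xs ! Suc i) \<in> E)"

definition elem_path :: "'v list \<Rightarrow> ('v list \<Rightarrow> 'k::field)" where
  "elem_path xs = (\<lambda>ys. if regular_path xs \<and> ys = xs then 1 else 0)"

definition elem_paths :: "'v set \<Rightarrow> nat \<Rightarrow> 'v list set" where
  "elem_paths V n = {xs. length xs = Suc n \<and> set xs \<subseteq> V}"

definition R_space :: "'v set \<Rightarrow> nat \<Rightarrow> ('v list \<Rightarrow> 'k::field) set" where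
  "R_space V n = {u. \<forall>xs. u xs \<noteq> 0 \<longrightarrow> xs \<in> elem_paths V n \<and> regular_path xs}"

definition del_at :: "nat \<Rightarrow> 'v list \<Rightarrow> 'v list" where
  "del_at j xs = take j xs @ drop (Suc j) xs"

definition bd :: "'v set \<Rightarrow> nat \<Rightarrow> ('v list \<Rightarrow> 'k::field) \<Rightarrow> ('v list \<Rightarrow> 'k)" where
  "bd V n u = (\<lambda>ys. \<Sum>xs\<in>elem_paths V n. u xs *
      (\<Sum>j\<le>n. if del_at j xs = ys \<and> regular_path ys then (-1) ^ j else 0))"

definition A_space :: "'v set \<Rightarrow> ('v \<times> 'v) set \<Rightarrow> nat \<Rightarrow> ('v list \<Rightarrow> 'k::field) set" where
  "A_space V E n = {u \<in> R_space V n. \<forall>xs. u xs \<noteq> 0 \<longrightarrow> allowed_path E xs}"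

definition Omega :: "'v set \<Rightarrow> ('v \<times> 'v) set \<Rightarrow> nat \<Rightarrow> ('v list \<Rightarrow> 'k::field) set" where
  "Omega V E n = (if n \<le> 1 then A_space V E n
     else {u \<in> A_space V E n. bd V n u \<in> A_space V E (n - 1)})"

definition circ_V :: "nat \<Rightarrow> nat set" where
  "circ_V m = {0..<m}"

definition circ_E :: "nat \<Rightarrow> nat set \<Rightarrow> (nat \<times> nat) set" where
  "circ_E m S = {(a, (a + s) mod m) | a s. a < m \<and> s \<in> S}"

definition alpha_path :: "nat \<Rightarrow> nat \<Rightarrow> (nat list \<Rightarrow> 'k::field)" where
  "alpha_path a n = elem_path (map (\<lambda>i. (a + i) mod 5) [0..<Suc n])"

definition beta_path :: "nat \<Rightarrow> nat \<Rightarrow> (nat list \<Rightarrow> 'k::field)" where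
  "beta_path a n = (\<Sum>j\<in>{1..n}. fscale ((-1) ^ (n - j))
      (elem_path (map (\<lambda>i. (a + i) mod 5) ([0..<j] @ [Suc j..<n + 2]))))"

end

theory Submission
  imports Defs
begin

(*
  For n >= 2 a chain u of allowed paths lies in Omega_n iff its boundary vanishes at every
  regular non-allowed face w = del_at k xs; since u is supported on allowed paths, that
  component of the boundary is, up to sign, the sum of u over the paths xs[k := v].
  In C_5^{1,2} consecutive vertices b, c of such a face that are not joined by an arrow
  satisfy c = b+4 or c = b+3, and the only vertices v with arrows b -> v -> c are b+2,
  resp. b+1 and b+2.  So u lies in Omega_n iff u vanishes on allowed paths with two
  consecutive steps +2 and takes opposite values on paths that differ by replacing the steps
  (+1,+2) by (+2,+1).  Moving two steps +2 towards each other then shows that u vanishes on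
  paths with more than one step +2.  The remaining allowed paths are the straight paths of
  alpha and the paths of beta that skip one vertex, along which u alternates in sign.  Hence
  u is determined by its values at the ten paths straight_path a n and skip_path a n n, and
  the alpha_a, beta_a are the basis dual to these values.  Characteristic 0 is never used.
*)

section \<open>Allowed chains and their boundaries\<close>

lemma sum_fun_apply: "(\<Sum>i\<in>A. f i) x = (\<Sum>i\<in>A. f i x)"
  by (induct A rule: infinite_finite_induct) auto

lemma vector_space_fscale: "vector_space (fscale :: 'k::field \<Rightarrow> ('b \<Rightarrow> 'k) \<Rightarrow> _)"
  by unfold_locales (auto simp: fscale_def fun_eq_iff algebra_simps)

lemma nth_del_at:
  "k < length xs \<Longrightarrow> i < length xs - 1 \<Longrightarrow> del_at k xs ! i = (if i < k then xs ! i else xs ! Suc i)"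
  by (auto simp: del_at_def nth_append min_def)

lemma length_del_at: "k < length xs \<Longrightarrow> length (del_at k xs) = length xs - 1"
  by (simp add: del_at_def)

lemma set_del_at_subset: "set (del_at k xs) \<subseteq> set xs"
  unfolding del_at_def using set_take_subset set_drop_subset by fastforce

lemma del_at_list_update: "del_at k (xs[k := v]) = del_at k xs"
  by (simp add: del_at_def)

lemma del_at_eq_imp_list_update:
  assumes l: "length ys = length xs" and k: "k < length xs" and eq: "del_at k ys = del_at k xs"
  shows "ys = xs[k := ys ! k]"
proof (rule nth_equalityI)
  show "length ys = length (xs[k := ys ! k])" using l by simp
  fix i assume i: "i < length ys"
  consider "i < k" | "i = k" | "k < i" by linarith
  then show "ys ! i = xs[k := ys ! k] ! i"
  proof cases
    case 1
    then have "i < length xs - 1" using k by linarith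
    then show ?thesis using 1 eq nth_del_at[OF k, of i] nth_del_at[of k ys i] l k by auto
  next
    case 3
    then obtain i' where i': "i = Suc i'" "k \<le> i'" by (cases i) auto
    then have "i' < length xs - 1" using i l by linarith
    then show ?thesis using i' eq nth_del_at[OF k, of i'] nth_del_at[of k ys i'] l k by auto
  qed (use k in simp)
qed

lemma regular_path_del_at:
  assumes "regular_path xs" "0 < k" "Suc k < length xs" "xs ! (k - 1) \<noteq> xs ! Suc k"
  shows "regular_path (del_at k xs)"
  unfolding regular_path_def
proof (intro allI impI)
  fix i assume "Suc i < length (del_at k xs)"
  then have i: "Suc (Suc i) < length xs" using assms by (simp add: length_del_at)
  have reg: "xs ! j \<noteq> xs ! Suc j" if "Suc j < length xs" for j
    using assms(1) that by (simp add: regular_path_def)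
  consider "Suc i < k" | "Suc i = k" | "k \<le> i" by linarith
  then show "del_at k xs ! i \<noteq> del_at k xs ! Suc i"
  proof cases
    case 2
    then show ?thesis using assms(2-4) i by (auto simp: nth_del_at)
  qed (use assms(2-3) i reg in \<open>simp_all add: nth_del_at\<close>)
qed

lemma regular_path_del_atD:
  assumes "regular_path (del_at k xs)" "0 < k" "Suc k < length xs"
  shows "xs ! (k - 1) \<noteq> xs ! Suc k"
proof -
  have "Suc (k - 1) < length (del_at k xs)" using assms(2,3) by (simp add: length_del_at)
  then have "del_at k xs ! (k - 1) \<noteq> del_at k xs ! Suc (k - 1)"
    using assms(1) unfolding regular_path_def by blast
  then show ?thesis using assms(2,3) by (simp add: nth_del_at)
qed

lemma allowed_path_list_update:
  assumes "allowed_path E xs" "0 < k" "Suc k < length xs"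
    and "(xs ! (k - 1), v) \<in> E" "(v, xs ! Suc k) \<in> E"
  shows "allowed_path E (xs[k := v])"
  unfolding allowed_path_def
proof (intro allI impI)
  fix i assume "Suc i < length (xs[k := v])"
  then consider "Suc i = k" | "i = k" | "Suc i \<noteq> k" "i \<noteq> k" "Suc i < length xs" by fastforce
  then show "(xs[k := v] ! i, xs[k := v] ! Suc i) \<in> E"
  proof cases
    case 1
    then have "i = k - 1" by simp
    then show ?thesis using 1 assms by simp
  next
    case 2
    then show ?thesis using assms by simp
  next
    case 3
    then show ?thesis using assms(1) by (simp add: allowed_path_def)
  qed
qed

lemma nth_equality_by_recurrence:
  assumes l: "length xs = Suc n" "length ys = Suc n" and head: "xs ! 0 = ys ! 0"
    and rec: "\<And>m. m < n \<Longrightarrow> xs ! Suc m = f m (xs ! m)" "\<And>m. m < n \<Longrightarrow> ys ! Suc m = f m (ys ! m)"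
  shows "xs = ys"
proof (rule nth_equalityI)
  show "length xs = length ys" using l by simp
  have "xs ! i = ys ! i" if "i \<le> n" for i
    using that by (induction i) (simp_all add: head rec)
  then show "xs ! i = ys ! i" if "i < length xs" for i using that l by simp
qed

lemma finite_elem_paths: "finite V \<Longrightarrow> finite (elem_paths V n)"
  unfolding elem_paths_def by (rule finite_subset[OF _ finite_lists_length_eq[of V "Suc n"]]) auto

lemma nth_elem_paths: "xs \<in> elem_paths V n \<Longrightarrow> i \<le> n \<Longrightarrow> xs ! i \<in> V"
  unfolding elem_paths_def using nth_mem[of i xs] by (simp add: subset_iff)

lemma elem_paths_list_update: "xs \<in> elem_paths V n \<Longrightarrow> v \<in> V \<Longrightarrow> xs[k := v] \<in> elem_paths V n"
  using set_update_subset_insert[of xs k v] by (auto simp: elem_paths_def)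

lemma sum_elem_paths_del_at:
  assumes V: "finite V" and xs: "xs \<in> elem_paths V n" and k: "k \<le> n"
  shows "(\<Sum>ys\<in>elem_paths V n. if del_at k ys = del_at k xs then g ys else 0) = (\<Sum>v\<in>V. g (xs[k := v]))"
proof -
  have l: "length xs = Suc n" using xs by (simp add: elem_paths_def)
  have fibre: "{ys \<in> elem_paths V n. del_at k ys = del_at k xs} = (\<lambda>v. xs[k := v]) ` V"
  proof (intro set_eqI iffI)
    fix ys assume "ys \<in> {ys \<in> elem_paths V n. del_at k ys = del_at k xs}"
    then have ys: "length ys = length xs" "set ys \<subseteq> V" "del_at k ys = del_at k xs"
      using l by (auto simp: elem_paths_def)
    have "ys ! k \<in> V" using ys(1,2) l k nth_mem[of k ys] by (metis le_imp_less_Suc subsetD)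
    moreover have "ys = xs[k := ys ! k]"
      by (rule del_at_eq_imp_list_update[OF ys(1) _ ys(3)]) (use l k in simp)
    ultimately show "ys \<in> (\<lambda>v. xs[k := v]) ` V" by blast
  next
    fix ys assume "ys \<in> (\<lambda>v. xs[k := v]) ` V"
    then show "ys \<in> {ys \<in> elem_paths V n. del_at k ys = del_at k xs}"
      using elem_paths_list_update[OF xs] by (auto simp: del_at_list_update)
  qed
  have inj: "inj_on (\<lambda>v. xs[k := v]) V"
  proof (rule inj_onI)
    fix v v' assume "xs[k := v] = xs[k := v']"
    then have "xs[k := v] ! k = xs[k := v'] ! k" by simp
    then show "v = v'" using l k by simp
  qed
  then have "(\<Sum>v\<in>V. g (xs[k := v])) = sum g {ys \<in> elem_paths V n. del_at k ys = del_at k xs}"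
    unfolding fibre sum.reindex[OF inj] comp_def by simp
  also have "\<dots> = (\<Sum>ys\<in>elem_paths V n. if del_at k ys = del_at k xs then g ys else 0)"
    by (rule sum.inter_filter[OF finite_elem_paths[OF V]])
  finally show ?thesis by simp
qed

lemma del_at_ne_if_non_edge:
  assumes ys: "allowed_path E ys" "length ys = length xs" and j: "j < length xs" "j \<noteq> k"
    and k: "0 < k" "Suc k < length xs" and non_edge: "(xs ! (k - 1), xs ! Suc k) \<notin> E"
  shows "del_at j ys \<noteq> del_at k xs"
proof
  let ?w = "del_at k xs"
  assume eq: "del_at j ys = ?w"
  have edge: "(ys ! i, ys ! Suc i) \<in> E" if "Suc i < length xs" for i
    using ys that by (simp add: allowed_path_def)
  have "(?w ! (k - 1), ?w ! k) \<in> E"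
  proof (cases "j < k")
    case True
    then have "\<not> k - 1 < j" "Suc (k - 1) = k" using k by auto
    then have "?w ! (k - 1) = ys ! k" "?w ! k = ys ! Suc k"
      using eq[symmetric] ys(2) j k \<open>j < k\<close> by (simp_all add: nth_del_at)
    then show ?thesis using edge k by simp
  next
    case False
    then have "k - 1 < j" "k < j" using j k by auto
    then have "?w ! (k - 1) = ys ! (k - 1)" "?w ! k = ys ! k"
      using eq[symmetric] ys(2) j k by (simp_all add: nth_del_at)
    then show ?thesis using edge[of "k - 1"] k by simp
  qed
  then show False using non_edge k by (simp add: nth_del_at)
qed

lemma bd_del_at_non_edge:
  fixes u :: "'v list \<Rightarrow> 'k::field"
  assumes V: "finite V" and u: "u \<in> A_space V E n" and xs: "xs \<in> elem_paths V n"
    and k: "0 < k" "k < n" and reg: "regular_path (del_at k xs)"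
    and non_edge: "(xs ! (k - 1), xs ! Suc k) \<notin> E"
  shows "bd V n u (del_at k xs) = (-1) ^ k * (\<Sum>v\<in>V. u (xs[k := v]))"
proof -
  let ?w = "del_at k xs"
  have lx: "length xs = Suc n" using xs by (simp add: elem_paths_def)
  have other_faces: "del_at j ys \<noteq> ?w"
    if "allowed_path E ys" "length ys = Suc n" "j \<le> n" "j \<noteq> k" for ys j
    using del_at_ne_if_non_edge[OF that(1) _ _ that(4) k(1) _ non_edge] that(2,3) lx k(2) by simp
  have face_sum: "u ys * (\<Sum>j\<le>n. if del_at j ys = ?w \<and> regular_path ?w then (-1) ^ j else 0)
      = (if del_at k ys = ?w then (-1) ^ k * u ys else 0)" if ys: "ys \<in> elem_paths V n" for ys
  proof (cases "u ys = 0")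
    case False
    then have "allowed_path E ys" using u by (auto simp: A_space_def)
    then have "(\<Sum>j\<le>n. if del_at j ys = ?w \<and> regular_path ?w then (-1) ^ j else 0)
        = (\<Sum>j\<le>n. if j = k then (if del_at k ys = ?w then (-1) ^ k else 0) else (0::'k))"
      using other_faces reg ys by (intro sum.cong) (auto simp: elem_paths_def)
    then show ?thesis using k by simp
  qed simp
  have "bd V n u ?w = (\<Sum>ys\<in>elem_paths V n. if del_at k ys = ?w then (-1) ^ k * u ys else 0)"
    unfolding bd_def using face_sum by (intro sum.cong) auto
  also have "\<dots> = (\<Sum>v\<in>V. (-1) ^ k * u (xs[k := v]))"
    by (rule sum_elem_paths_del_at[OF V xs]) (use k in simp)
  finally show ?thesis by (simp add: sum_distrib_left)
qed

lemma Omega_sum_list_update_eq_0: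
  fixes u :: "'v list \<Rightarrow> 'k::field"
  assumes V: "finite V" and u: "u \<in> Omega V E n" and xs: "xs \<in> elem_paths V n"
    and k: "0 < k" "k < n" and reg: "regular_path (del_at k xs)"
    and non_edge: "(xs ! (k - 1), xs ! Suc k) \<notin> E"
  shows "(\<Sum>v\<in>V. u (xs[k := v])) = 0"
proof -
  have uA: "u \<in> A_space V E n" and bdA: "bd V n u \<in> A_space V E (n - 1)"
    using u k by (auto simp: Omega_def split: if_splits)
  have lx: "length xs = Suc n" using xs by (simp add: elem_paths_def)
  have "del_at k xs ! (k - 1) = xs ! (k - 1)" "del_at k xs ! Suc (k - 1) = xs ! Suc k"
    using lx k by (simp_all add: nth_del_at)
  moreover have "Suc (k - 1) < length (del_at k xs)" using lx k by (simp add: length_del_at)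
  ultimately have "\<not> allowed_path E (del_at k xs)"
    using non_edge unfolding allowed_path_def by auto
  then have "bd V n u (del_at k xs) = 0" using bdA unfolding A_space_def by blast
  then show ?thesis using bd_del_at_non_edge[OF V uA xs k reg non_edge] by simp
qed

lemma bd_in_R_space:
  assumes "1 \<le> n"
  shows "bd V n u \<in> R_space V (n - 1)"
  unfolding R_space_def
proof (intro CollectI allI impI)
  fix ys assume nz: "bd V n u ys \<noteq> 0"
  have "\<exists>zs\<in>elem_paths V n. \<exists>j\<le>n. del_at j zs = ys \<and> regular_path ys"
  proof (rule ccontr)
    assume "\<not> ?thesis"
    then have "bd V n u ys = 0" unfolding bd_def by (auto intro!: sum.neutral)
    with nz show False by simp
  qed
  then obtain zs j where zs: "zs \<in> elem_paths V n" and j: "j \<le> n" "del_at j zs = ys"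
    and reg: "regular_path ys" by blast
  have "length ys = n" "set ys \<subseteq> V"
    using zs j set_del_at_subset[of j zs] by (auto simp: elem_paths_def del_at_def)
  then show "ys \<in> elem_paths V (n - 1) \<and> regular_path ys"
    using assms reg by (simp add: elem_paths_def)
qed

lemma OmegaI:
  fixes u :: "'v list \<Rightarrow> 'k::field"
  assumes V: "finite V" and n: "2 \<le> n" and uA: "u \<in> A_space V E n"
    and sum_zero: "\<And>xs k. xs \<in> elem_paths V n \<Longrightarrow> 0 < k \<Longrightarrow> k < n \<Longrightarrow> regular_path (del_at k xs)
      \<Longrightarrow> (xs ! (k - 1), xs ! Suc k) \<notin> E \<Longrightarrow> (\<Sum>v\<in>V. u (xs[k := v])) = 0"
  shows "u \<in> Omega V E n"
proof -
  have "bd V n u \<in> A_space V E (n - 1)"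
    unfolding A_space_def
  proof (intro CollectI conjI allI impI)
    show "bd V n u \<in> R_space V (n - 1)" by (rule bd_in_R_space) (use n in simp)
    fix ys assume nz: "bd V n u ys \<noteq> 0"
    then have "ys \<in> elem_paths V (n - 1)" and reg: "regular_path ys"
      using bd_in_R_space[of n V u] n unfolding R_space_def by auto
    then have ly: "length ys = n" and sy: "set ys \<subseteq> V" using n by (auto simp: elem_paths_def)
    show "allowed_path E ys"
    proof (rule ccontr)
      assume "\<not> allowed_path E ys"
      then obtain i where i: "Suc i < n" and non_edge: "(ys ! i, ys ! Suc i) \<notin> E"
        using ly unfolding allowed_path_def by auto
      define xs where "xs = take (Suc i) ys @ ys ! i # drop (Suc i) ys"
      have xs: "xs \<in> elem_paths V n" "del_at (Suc i) xs = ys"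
        using ly sy i set_take_subset[of "Suc i" ys] set_drop_subset[of "Suc i" ys]
        by (auto simp: xs_def elem_paths_def del_at_def)
      have "xs ! i = ys ! i" "xs ! Suc (Suc i) = ys ! Suc i"
        using ly i by (simp_all add: xs_def nth_append)
      then have "bd V n u ys = (-1) ^ Suc i * (\<Sum>v\<in>V. u (xs[Suc i := v]))"
        using bd_del_at_non_edge[OF V uA xs(1), of "Suc i"] xs(2) reg non_edge i by simp
      also have "\<dots> = 0"
        using sum_zero[OF xs(1), of "Suc i"] xs(2) reg non_edge i \<open>xs ! i = ys ! i\<close>
          \<open>xs ! Suc (Suc i) = ys ! Suc i\<close> by simp
      finally show False using nz by simp
    qed
  qed
  then show ?thesis using uA n by (simp add: Omega_def)
qed

lemma bd_add: "bd V n (u + v) = bd V n u + bd V n v"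
  unfolding bd_def by (auto simp: fun_eq_iff sum.distrib distrib_right)

lemma bd_fscale: "bd V n (fscale c u) = fscale c (bd V n u)"
  unfolding bd_def fscale_def by (auto simp: fun_eq_iff sum_distrib_left mult.assoc)

lemma bd_zero: "bd V n 0 = 0"
  unfolding bd_def by (auto simp: fun_eq_iff)

lemma A_space_closed:
  "0 \<in> A_space V E n"
  "u \<in> A_space V E n \<Longrightarrow> v \<in> A_space V E n \<Longrightarrow> u + v \<in> A_space V E n"
  "u \<in> A_space V E n \<Longrightarrow> fscale c u \<in> A_space V E n"
  by (auto simp: A_space_def R_space_def fscale_def) (metis add.right_neutral)+

lemma elem_path_in_A_space: "xs \<in> elem_paths V n \<Longrightarrow> allowed_path E xs \<Longrightarrow> elem_path xs \<in> A_space V E n"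
  by (auto simp: A_space_def R_space_def elem_path_def)

lemma subspace_A_space: "module.subspace fscale (A_space V E n)"
proof -
  interpret vector_space fscale by (rule vector_space_fscale)
  show ?thesis by (rule subspaceI) (simp_all add: A_space_closed)
qed

lemma subspace_Omega: "module.subspace fscale (Omega V E n)"
proof -
  interpret vector_space fscale by (rule vector_space_fscale)
  show ?thesis
    by (rule subspaceI) (auto simp: Omega_def bd_add bd_fscale bd_zero A_space_closed split: if_splits)
qed

lemma Omega_imp_A_space: "u \<in> Omega V E n \<Longrightarrow> u \<in> A_space V E n"
  by (simp add: Omega_def split: if_splits)

lemma A_space_support:
  assumes "u \<in> A_space V E n" "u xs \<noteq> 0"
  shows "xs \<in> elem_paths V n" "allowed_path E xs"
  using assms by (auto simp: A_space_def R_space_def)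

lemma sum_list_update_A_space:
  fixes u :: "'v list \<Rightarrow> 'k::field"
  assumes V: "finite V" and u: "u \<in> A_space V E n" and k: "0 < k" "Suc k < length xs"
  shows "(\<Sum>v\<in>V. u (xs[k := v]))
    = (\<Sum>v\<in>{v \<in> V. (xs ! (k - 1), v) \<in> E \<and> (v, xs ! Suc k) \<in> E}. u (xs[k := v]))"
proof (rule sum.mono_neutral_right[OF V])
  show "{v \<in> V. (xs ! (k - 1), v) \<in> E \<and> (v, xs ! Suc k) \<in> E} \<subseteq> V" by (rule Collect_restrict)
  show "\<forall>v\<in>V - {v \<in> V. (xs ! (k - 1), v) \<in> E \<and> (v, xs ! Suc k) \<in> E}. u (xs[k := v]) = 0"
  proof (rule ballI, rule ccontr)
    fix v assume v: "v \<in> V - {v \<in> V. (xs ! (k - 1), v) \<in> E \<and> (v, xs ! Suc k) \<in> E}"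
      and nz: "u (xs[k := v]) \<noteq> 0"
    have "allowed_path E (xs[k := v])" by (rule A_space_support(2)[OF u nz])
    then have edge: "(xs[k := v] ! i, xs[k := v] ! Suc i) \<in> E" if "Suc i < length xs" for i
      using that by (simp add: allowed_path_def)
    have "(xs ! (k - 1), v) \<in> E" using edge[of "k - 1"] k by simp
    moreover have "(v, xs ! Suc k) \<in> E" using edge[of k] k by simp
    ultimately show False using v by blast
  qed
qed

section \<open>Membership in Omega_n for the circulant digraph C_5^{1,2}\<close>

abbreviation V5 :: "nat set" where "V5 \<equiv> circ_V 5"

abbreviation E5 :: "(nat \<times> nat) set" where "E5 \<equiv> circ_E 5 {1, 2}"

lemma less_5_cases: "(b::nat) < 5 \<Longrightarrow> b = 0 \<or> b = 1 \<or> b = 2 \<or> b = 3 \<or> b = 4"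
  by auto

lemma add_mod_5_eq_iff: "i < 5 \<Longrightarrow> j < 5 \<Longrightarrow> ((b::nat) + i) mod 5 = (b + j) mod 5 \<longleftrightarrow> i = j"
proof -
  assume ij: "i < 5" "j < 5"
  have "(b + i) mod 5 = (b mod 5 + i) mod 5" "(b + j) mod 5 = (b mod 5 + j) mod 5"
    by (simp_all add: mod_add_left_eq)
  moreover have "b mod 5 < 5" by simp
  ultimately show ?thesis using less_5_cases[OF ij(1)] less_5_cases[OF ij(2)] less_5_cases[of "b mod 5"]
    by auto
qed

lemma add_mod_5_neq_self: "b < 5 \<Longrightarrow> 0 < i \<Longrightarrow> i < 5 \<Longrightarrow> ((b::nat) + i) mod 5 \<noteq> b"
  using add_mod_5_eq_iff[of i 0 b] by simp

lemma E5_iff: "(x, y) \<in> E5 \<longleftrightarrow> x < 5 \<and> (y = (x + 1) mod 5 \<or> y = (x + 2) mod 5)"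
  unfolding circ_E_def by (auto intro: exI[of _ "1::nat"] exI[of _ "2::nat"])

lemma finite_V5: "finite V5"
  by (simp add: circ_V_def)

lemma regular_path_if_allowed_E5:
  assumes "allowed_path E5 xs"
  shows "regular_path xs"
  unfolding regular_path_def
proof (intro allI impI)
  fix i assume "Suc i < length xs"
  then have "(xs ! i, xs ! Suc i) \<in> E5" using assms unfolding allowed_path_def by blast
  then have b: "xs ! i < 5" and step: "xs ! Suc i = (xs ! i + 1) mod 5 \<or> xs ! Suc i = (xs ! i + 2) mod 5"
    unfolding E5_iff by blast+
  have "(xs ! i + 1) mod 5 \<noteq> xs ! i" "(xs ! i + 2) mod 5 \<noteq> xs ! i"
    by (rule add_mod_5_neq_self[OF b]; simp)+
  with step show "xs ! i \<noteq> xs ! Suc i" by metis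
qed

lemma E5_midpoints:
  assumes "b < 5"
  shows "{v \<in> V5. (b, v) \<in> E5 \<and> (v, (b + 4) mod 5) \<in> E5} = {(b + 2) mod 5}"
    and "{v \<in> V5. (b, v) \<in> E5 \<and> (v, (b + 3) mod 5) \<in> E5} = {(b + 1) mod 5, (b + 2) mod 5}"
  using less_5_cases[OF assms] unfolding E5_iff by (auto simp: circ_V_def)

lemma E5_non_edge_iff:
  assumes "b < 5" "c < 5"
  shows "c \<noteq> b \<and> (b, c) \<notin> E5 \<longleftrightarrow> c = (b + 3) mod 5 \<or> c = (b + 4) mod 5"
  unfolding E5_iff using less_5_cases[OF assms(1)] less_5_cases[OF assms(2)]
  by (elim disjE) simp_all

lemma sum_list_update_E5:
  fixes u :: "nat list \<Rightarrow> 'k::field"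
  assumes u: "u \<in> A_space V5 E5 n" and xs: "xs \<in> elem_paths V5 n" and k: "0 < k" "k < n"
  shows "xs ! Suc k = (xs ! (k - 1) + 4) mod 5 \<Longrightarrow>
      (\<Sum>v\<in>V5. u (xs[k := v])) = u (xs[k := (xs ! (k - 1) + 2) mod 5])"
    and "xs ! Suc k = (xs ! (k - 1) + 3) mod 5 \<Longrightarrow>
      (\<Sum>v\<in>V5. u (xs[k := v])) = u (xs[k := (xs ! (k - 1) + 1) mod 5]) + u (xs[k := (xs ! (k - 1) + 2) mod 5])"
proof -
  have b: "xs ! (k - 1) < 5" using nth_elem_paths[OF xs, of "k - 1"] k by (simp add: circ_V_def)
  have l: "Suc k < length xs" using xs k by (simp add: elem_paths_def)
  note midpoints = sum_list_update_A_space[OF finite_V5 u k(1) l]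
  show "(\<Sum>v\<in>V5. u (xs[k := v])) = u (xs[k := (xs ! (k - 1) + 2) mod 5])"
    if "xs ! Suc k = (xs ! (k - 1) + 4) mod 5"
    using midpoints[unfolded that E5_midpoints(1)[OF b]] by simp
  have "(xs ! (k - 1) + 1) mod 5 \<noteq> (xs ! (k - 1) + 2) mod 5" by (subst add_mod_5_eq_iff) simp_all
  then show "(\<Sum>v\<in>V5. u (xs[k := v]))
      = u (xs[k := (xs ! (k - 1) + 1) mod 5]) + u (xs[k := (xs ! (k - 1) + 2) mod 5])"
    if "xs ! Suc k = (xs ! (k - 1) + 3) mod 5"
    using midpoints[unfolded that E5_midpoints(2)[OF b]] by simp
qed

lemma Omega_E5_sum_list_update_eq_0:
  fixes u :: "nat list \<Rightarrow> 'k::field"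
  assumes u: "u \<in> Omega V5 E5 n" and xs: "xs \<in> elem_paths V5 n" "allowed_path E5 xs"
    and k: "0 < k" "k < n"
    and jump: "xs ! Suc k = (xs ! (k - 1) + 3) mod 5 \<or> xs ! Suc k = (xs ! (k - 1) + 4) mod 5"
  shows "(\<Sum>v\<in>V5. u (xs[k := v])) = 0"
proof -
  have l: "Suc k < length xs" using xs k by (simp add: elem_paths_def)
  have b5: "xs ! (k - 1) < 5" and c5: "xs ! Suc k < 5"
    using nth_elem_paths[OF xs(1), of "k - 1"] nth_elem_paths[OF xs(1), of "Suc k"] k
    by (simp_all add: circ_V_def)
  have "xs ! Suc k \<noteq> xs ! (k - 1) \<and> (xs ! (k - 1), xs ! Suc k) \<notin> E5"
    using E5_non_edge_iff[OF b5 c5] jump by blast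
  then show ?thesis
    using Omega_sum_list_update_eq_0[OF finite_V5 u xs(1) k]
      regular_path_del_at[OF regular_path_if_allowed_E5[OF xs(2)] k(1) l] by simp
qed

lemma Omega_E5_jump_four_eq_0:
  fixes u :: "nat list \<Rightarrow> 'k::field"
  assumes u: "u \<in> Omega V5 E5 n" and xs: "xs \<in> elem_paths V5 n" "allowed_path E5 xs"
    and k: "0 < k" "k < n" and jump: "xs ! Suc k = (xs ! (k - 1) + 4) mod 5"
  shows "u xs = 0"
proof -
  define b where "b = xs ! (k - 1)"
  have l: "Suc k < length xs" using xs k by (simp add: elem_paths_def)
  have b5: "b < 5" using nth_elem_paths[OF xs(1), of "k - 1"] k by (simp add: b_def circ_V_def)
  have edge: "(xs ! i, xs ! Suc i) \<in> E5" if "Suc i < length xs" for i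
    using xs(2) that unfolding allowed_path_def by blast
  have "Suc (k - 1) = k" using k by simp
  then have edges: "(b, xs ! k) \<in> E5" "(xs ! k, xs ! Suc k) \<in> E5"
    using edge[of "k - 1"] edge[of k] l unfolding b_def by (metis Suc_lessD, blast)
  have "xs ! k \<in> V5" by (rule nth_elem_paths[OF xs(1)]) (use k in linarith)
  then have "xs ! k \<in> {v \<in> V5. (b, v) \<in> E5 \<and> (v, (b + 4) mod 5) \<in> E5}"
    using edges jump[folded b_def] by (metis (mono_tags, lifting) mem_Collect_eq)
  then have mid: "xs ! k = (b + 2) mod 5" unfolding E5_midpoints(1)[OF b5] by blast
  have "(\<Sum>v\<in>V5. u (xs[k := v])) = u xs"
    using sum_list_update_E5(1)[OF Omega_imp_A_space[OF u] xs(1) k jump, folded b_def] mid[symmetric]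
    by simp
  then show ?thesis using Omega_E5_sum_list_update_eq_0[OF u xs k] jump by simp
qed

lemma Omega_E5_jump_three_sum_eq_0:
  fixes u :: "nat list \<Rightarrow> 'k::field"
  assumes u: "u \<in> Omega V5 E5 n" and xs: "xs \<in> elem_paths V5 n" "allowed_path E5 xs"
    and k: "0 < k" "k < n" and jump: "xs ! Suc k = (xs ! (k - 1) + 3) mod 5"
  shows "u (xs[k := (xs ! (k - 1) + 1) mod 5]) + u (xs[k := (xs ! (k - 1) + 2) mod 5]) = 0"
  using sum_list_update_E5(2)[OF Omega_imp_A_space[OF u] xs(1) k jump]
    Omega_E5_sum_list_update_eq_0[OF u xs k] jump by simp

lemma OmegaI_E5:
  fixes u :: "nat list \<Rightarrow> 'k::field"
  assumes n: "2 \<le> n" and u: "u \<in> A_space V5 E5 n"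
    and jump_four: "\<And>xs k. xs \<in> elem_paths V5 n \<Longrightarrow> allowed_path E5 xs \<Longrightarrow> 0 < k \<Longrightarrow> k < n
      \<Longrightarrow> xs ! Suc k = (xs ! (k - 1) + 4) mod 5 \<Longrightarrow> u xs = 0"
    and jump_three: "\<And>xs k. xs \<in> elem_paths V5 n \<Longrightarrow> allowed_path E5 xs \<Longrightarrow> 0 < k \<Longrightarrow> k < n
      \<Longrightarrow> xs ! Suc k = (xs ! (k - 1) + 3) mod 5
      \<Longrightarrow> u (xs[k := (xs ! (k - 1) + 1) mod 5]) + u (xs[k := (xs ! (k - 1) + 2) mod 5]) = 0"
  shows "u \<in> Omega V5 E5 n"
proof (rule OmegaI[OF finite_V5 n u])
  fix xs k assume xs: "xs \<in> elem_paths V5 n" and k: "0 < k" "k < n"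
    and reg: "regular_path (del_at k xs)" and non_edge: "(xs ! (k - 1), xs ! Suc k) \<notin> E5"
  define b where "b = xs ! (k - 1)"
  define c where "c = xs ! Suc k"
  have l: "length xs = Suc n" using xs by (simp add: elem_paths_def)
  have b5: "b < 5" and c5: "c < 5"
    using nth_elem_paths[OF xs, of "k - 1"] nth_elem_paths[OF xs, of "Suc k"] k
    by (simp_all add: b_def c_def circ_V_def)
  have "c \<noteq> b" using regular_path_del_atD[OF reg k(1)] l k by (simp add: b_def c_def)
  then have jump: "c = (b + 3) mod 5 \<or> c = (b + 4) mod 5"
    using E5_non_edge_iff[OF b5 c5] non_edge by (simp add: b_def c_def)
  have updated: "xs[k := v] \<in> elem_paths V5 n" "xs[k := v] ! (k - 1) = b" "xs[k := v] ! Suc k = c"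
    if "v < 5" for v
    using elem_paths_list_update[OF xs, of v k] that l k by (simp_all add: b_def c_def circ_V_def)
  from jump show "(\<Sum>v\<in>V5. u (xs[k := v])) = 0"
  proof
    assume three: "c = (b + 3) mod 5"
    have "u (xs[k := (b + 1) mod 5]) + u (xs[k := (b + 2) mod 5]) = 0"
    proof (cases "u (xs[k := (b + 1) mod 5]) = 0 \<and> u (xs[k := (b + 2) mod 5]) = 0")
      case False
      then obtain v where "v \<in> {(b + 1) mod 5, (b + 2) mod 5}" and nz: "u (xs[k := v]) \<noteq> 0"
        by auto
      then have v: "v < 5" "u (xs[k := v]) \<noteq> 0" by auto
      show ?thesis
        using jump_three[OF updated(1)[OF v(1)] A_space_support(2)[OF u v(2)] k] updated[OF v(1)] three
      by simp
    qed simp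
    then show ?thesis
      using sum_list_update_E5(2)[OF u xs k] three by (simp add: b_def c_def)
  next
    assume four: "c = (b + 4) mod 5"
    have "u (xs[k := (b + 2) mod 5]) = 0"
    proof (rule ccontr)
      assume nz: "u (xs[k := (b + 2) mod 5]) \<noteq> 0"
      have "(b + 2) mod 5 < 5" by simp
      from updated[OF this] show False
        using jump_four[OF _ A_space_support(2)[OF u nz] k] four nz by (simp add: c_def)
    qed
    then show ?thesis
      using sum_list_update_E5(1)[OF u xs k] four by (simp add: b_def c_def)
  qed
qed

lemma allowed_E5_swap_steps:
  assumes xs: "xs \<in> elem_paths V5 n" "allowed_path E5 xs" and k: "0 < k" "k < n"
    and jump: "xs ! Suc k = (xs ! (k - 1) + 3) mod 5"
  shows "xs[k := (xs ! (k - 1) + 2) mod 5] \<in> elem_paths V5 n"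
    and "allowed_path E5 (xs[k := (xs ! (k - 1) + 2) mod 5])"
proof -
  have l: "Suc k < length xs" using xs(1) k by (simp add: elem_paths_def)
  have b5: "xs ! (k - 1) < 5" using nth_elem_paths[OF xs(1), of "k - 1"] k by (simp add: circ_V_def)
  show "xs[k := (xs ! (k - 1) + 2) mod 5] \<in> elem_paths V5 n"
    by (rule elem_paths_list_update[OF xs(1)]) (simp add: circ_V_def)
  have "(xs ! (k - 1), (xs ! (k - 1) + 2) mod 5) \<in> E5" "((xs ! (k - 1) + 2) mod 5, xs ! Suc k) \<in> E5"
    using b5 jump unfolding E5_iff by (simp_all add: mod_simps add.commute)
  then show "allowed_path E5 (xs[k := (xs ! (k - 1) + 2) mod 5])"
    by (rule allowed_path_list_update[OF xs(2) k(1) l])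
qed

section \<open>The chains alpha and beta\<close>

definition straight_path :: "nat \<Rightarrow> nat \<Rightarrow> nat list" where
  "straight_path a n = map (\<lambda>i. (a + i) mod 5) [0..<Suc n]"

text \<open>The vertices a, ..., a + n + 1 with a + j omitted: the j-th term of beta_path a n.\<close>
definition skip_path :: "nat \<Rightarrow> nat \<Rightarrow> nat \<Rightarrow> nat list" where
  "skip_path a n j = map (\<lambda>i. (a + (if i < j then i else Suc i)) mod 5) [0..<Suc n]"

lemma length_straight_path [simp]: "length (straight_path a n) = Suc n"
  by (simp add: straight_path_def)

lemma length_skip_path [simp]: "length (skip_path a n j) = Suc n"
  by (simp add: skip_path_def)

lemma nth_straight_path: "i \<le> n \<Longrightarrow> straight_path a n ! i = (a + i) mod 5"
  by (simp add: straight_path_def del: upt_Suc)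

lemma nth_skip_path: "i \<le> n \<Longrightarrow> skip_path a n j ! i = (a + (if i < j then i else Suc i)) mod 5"
  by (simp add: skip_path_def del: upt_Suc)

lemma straight_path_step: "m < n \<Longrightarrow> straight_path a n ! Suc m = (straight_path a n ! m + 1) mod 5"
  by (simp add: nth_straight_path mod_simps)

lemma skip_path_step:
  "m < n \<Longrightarrow> skip_path a n j ! Suc m = (skip_path a n j ! m + (if Suc m = j then 2 else 1)) mod 5"
  by (auto simp: nth_skip_path mod_simps)

lemma skip_path_long_step_iff:
  "m < n \<Longrightarrow> skip_path a n j ! Suc m = (skip_path a n j ! m + 2) mod 5 \<longleftrightarrow> Suc m = j"
  using skip_path_step[of m n a j] add_mod_5_eq_iff[of 1 2 "skip_path a n j ! m"] by auto

lemma elem_paths_straight_path: "straight_path a n \<in> elem_paths V5 n"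
  by (auto simp: elem_paths_def straight_path_def circ_V_def)

lemma elem_paths_skip_path: "skip_path a n j \<in> elem_paths V5 n"
  by (auto simp: elem_paths_def skip_path_def circ_V_def)

lemma allowed_straight_path: "allowed_path E5 (straight_path a n)"
  unfolding allowed_path_def E5_iff by (simp add: nth_straight_path mod_simps)

lemma allowed_skip_path: "allowed_path E5 (skip_path a n j)"
  unfolding allowed_path_def E5_iff
proof (intro allI impI conjI)
  fix i assume "Suc i < length (skip_path a n j)"
  then have i: "i < n" by simp
  show "skip_path a n j ! i < 5" using i by (simp add: nth_skip_path)
  show "skip_path a n j ! Suc i = (skip_path a n j ! i + 1) mod 5
      \<or> skip_path a n j ! Suc i = (skip_path a n j ! i + 2) mod 5"
    using skip_path_step[OF i, of a j] by presburger
qed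

lemma head_straight_path: "a < 5 \<Longrightarrow> straight_path a n ! 0 = a"
  by (simp add: nth_straight_path)

lemma head_skip_path: "a < 5 \<Longrightarrow> 0 < j \<Longrightarrow> skip_path a n j ! 0 = a"
  by (simp add: nth_skip_path)

lemma straight_path_ne_skip_path:
  assumes "j \<in> {1..n}"
  shows "straight_path a' n \<noteq> skip_path a n j"
proof
  assume eq: "straight_path a' n = skip_path a n j"
  obtain m where m: "j = Suc m" "m < n" using assms by (cases j) auto
  have "skip_path a n j ! Suc m = (skip_path a n j ! m + 2) mod 5"
    using skip_path_long_step_iff[OF m(2)] m(1) by simp
  moreover have "straight_path a' n ! Suc m = (straight_path a' n ! m + 1) mod 5"
    by (rule straight_path_step[OF m(2)])
  ultimately show False
    using eq add_mod_5_eq_iff[of 1 2 "straight_path a' n ! m"] by simp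
qed

lemma skip_path_inj:
  assumes "j \<in> {1..n}" "j' \<in> {1..n}" "skip_path a n j = skip_path a' n j'"
  shows "j = j'"
proof -
  obtain m where m: "j = Suc m" "m < n" using assms(1) by (cases j) auto
  show ?thesis
    using skip_path_long_step_iff[OF m(2), of a j] skip_path_long_step_iff[OF m(2), of a' j'] m assms(3)
    by simp
qed

lemma alpha_path_apply: "a < 5 \<Longrightarrow> alpha_path a n xs = (if xs = straight_path a n then 1 else 0)"
  using regular_path_if_allowed_E5[OF allowed_straight_path]
  by (simp add: alpha_path_def straight_path_def elem_path_def)

lemma map_skip_eq_skip_path:
  "j \<le> Suc n \<Longrightarrow> map (\<lambda>i. (a + i) mod 5) ([0..<j] @ [Suc j..<n + 2]) = skip_path a n j"
  unfolding skip_path_def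
  by (rule nth_equalityI) (auto simp: nth_append simp del: upt_Suc)

lemma beta_path_eq:
  "beta_path a n = (\<Sum>j\<in>{1..n}. fscale ((-1) ^ (n - j)) (elem_path (skip_path a n j)))"
  unfolding beta_path_def by (intro sum.cong refl) (subst map_skip_eq_skip_path, auto)

lemma beta_path_apply_skip_path:
  assumes j: "j \<in> {1..n}"
  shows "beta_path a n (skip_path a n j) = (-1) ^ (n - j)"
proof -
  have inj: "skip_path a n j = skip_path a n j' \<longleftrightarrow> j' = j" if "j' \<in> {1..n}" for j'
    using skip_path_inj[OF j that] by blast
  have "beta_path a n (skip_path a n j)
      = (\<Sum>j'\<in>{1..n}. if j' = j then (-1) ^ (n - j') else 0)"
    unfolding beta_path_eq sum_fun_apply fscale_def elem_path_def
    using regular_path_if_allowed_E5[OF allowed_skip_path] inj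
    by (intro sum.cong refl) auto
  then show ?thesis using j by simp
qed

lemma beta_path_apply_other: "xs \<notin> skip_path a n ` {1..n} \<Longrightarrow> beta_path a n xs = 0"
  unfolding beta_path_eq sum_fun_apply fscale_def elem_path_def by (auto intro!: sum.neutral)

lemma alpha_path_in_A_space: "a < 5 \<Longrightarrow> alpha_path a n \<in> A_space V5 E5 n"
  unfolding alpha_path_def
  using elem_path_in_A_space[OF elem_paths_straight_path allowed_straight_path]
  by (simp add: straight_path_def)

lemma beta_path_in_A_space: "beta_path a n \<in> A_space V5 E5 n"
proof -
  interpret vector_space fscale by (rule vector_space_fscale)
  show ?thesis
    unfolding beta_path_eq
    by (intro subspace_sum[OF subspace_A_space] subspace_scale[OF subspace_A_space]
        elem_path_in_A_space elem_paths_skip_path allowed_skip_path)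
qed

lemma straight_path_two_steps:
  "0 < k \<Longrightarrow> k < n \<Longrightarrow> straight_path a n ! Suc k = (straight_path a n ! (k - 1) + 2) mod 5"
  by (simp add: nth_straight_path mod_simps)

lemma skip_path_two_steps:
  "0 < k \<Longrightarrow> k < n \<Longrightarrow>
    skip_path a n j ! Suc k = (skip_path a n j ! (k - 1) + (if j = k \<or> j = Suc k then 3 else 2)) mod 5"
  by (auto simp: nth_skip_path mod_simps)

lemma skip_path_swap_left:
  assumes k: "0 < k" "k < n" and long: "skip_path a n j ! Suc k = (skip_path a n j ! k + 2) mod 5"
  shows "(skip_path a n j)[k := (skip_path a n j ! (k - 1) + 2) mod 5] = skip_path a n k"
proof -
  have "j = Suc k" using skip_path_long_step_iff[OF k(2)] long by simp
  moreover have "(skip_path a n (Suc k) ! (k - 1) + 2) mod 5 = (a + Suc k) mod 5"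
    using k by (simp add: nth_skip_path mod_simps)
  ultimately show ?thesis using k by (auto simp: nth_skip_path nth_list_update intro: nth_equalityI)
qed

lemma skip_path_swap_right:
  assumes k: "0 < k" "k < n" and long: "skip_path a n j ! k = (skip_path a n j ! (k - 1) + 2) mod 5"
  shows "(skip_path a n j)[k := (skip_path a n j ! (k - 1) + 1) mod 5] = skip_path a n (Suc k)"
proof -
  have "j = k" using skip_path_long_step_iff[of "k - 1" n a j] long k by simp
  moreover have "(skip_path a n k ! (k - 1) + 1) mod 5 = (a + k) mod 5"
    using k by (simp add: nth_skip_path mod_simps)
  ultimately show ?thesis using k by (auto simp: nth_skip_path nth_list_update intro: nth_equalityI)
qed

lemma alpha_path_jump_eq_0:
  assumes a: "a < 5" and k: "0 < k" "k < n" and d: "d = 3 \<or> d = 4"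
    and jump: "xs ! Suc k = (xs ! (k - 1) + d) mod 5"
  shows "alpha_path a n xs = 0"
proof -
  have "xs \<noteq> straight_path a n"
  proof
    assume "xs = straight_path a n"
    then have "(xs ! (k - 1) + d) mod 5 = (xs ! (k - 1) + 2) mod 5"
      using straight_path_two_steps[OF k] jump by simp
    then show False using add_mod_5_eq_iff[of d 2 "xs ! (k - 1)"] d by auto
  qed
  then show ?thesis by (simp add: alpha_path_apply[OF a])
qed

lemma alpha_path_in_Omega:
  assumes a: "a < 5" and n: "1 \<le> n"
  shows "(alpha_path a n :: nat list \<Rightarrow> 'k::field) \<in> Omega V5 E5 n"
proof (cases "n = 1")
  case True
  then show ?thesis using alpha_path_in_A_space[OF a] by (simp add: Omega_def)
next
  case False
  show ?thesis
  proof (rule OmegaI_E5)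
    show "2 \<le> n" using False n by simp
    show "alpha_path a n \<in> A_space V5 E5 n" by (rule alpha_path_in_A_space[OF a])
  next
    fix xs :: "nat list" and k
    assume k: "0 < k" "k < n" and jump: "xs ! Suc k = (xs ! (k - 1) + 4) mod 5"
    show "alpha_path a n xs = 0" by (rule alpha_path_jump_eq_0[OF a k _ jump]) simp
  next
    fix xs :: "nat list" and k
    assume k: "0 < k" "k < n" and jump: "xs ! Suc k = (xs ! (k - 1) + 3) mod 5"
    have "alpha_path a n (xs[k := v]) = (0::'k)" for v
      by (rule alpha_path_jump_eq_0[OF a k, of 3]) (use k jump in simp_all)
    then show "alpha_path a n (xs[k := (xs ! (k - 1) + 1) mod 5])
        + alpha_path a n (xs[k := (xs ! (k - 1) + 2) mod 5]) = (0::'k)" by simp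
  qed
qed

lemma beta_path_jump_four_eq_0:
  assumes k: "0 < k" "k < n" and jump: "xs ! Suc k = (xs ! (k - 1) + 4) mod 5"
  shows "beta_path a n xs = 0"
proof (rule beta_path_apply_other)
  show "xs \<notin> skip_path a n ` {1..n}"
  proof
    assume "xs \<in> skip_path a n ` {1..n}"
    then obtain j where "xs = skip_path a n j" by blast
    then have "(xs ! (k - 1) + 4) mod 5 = (xs ! (k - 1) + (if j = k \<or> j = Suc k then 3 else 2)) mod 5"
      using skip_path_two_steps[OF k] jump by simp
    then show False
      using add_mod_5_eq_iff[of 4 3 "xs ! (k - 1)"] add_mod_5_eq_iff[of 4 2 "xs ! (k - 1)"]
      by (simp split: if_splits)
  qed
qed

lemma beta_path_jump_three_sum_eq_0:
  assumes l: "length xs = Suc n" and k: "0 < k" "k < n"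
    and jump: "xs ! Suc k = (xs ! (k - 1) + 3) mod 5"
  shows "beta_path a n (xs[k := (xs ! (k - 1) + 1) mod 5])
    + beta_path a n (xs[k := (xs ! (k - 1) + 2) mod 5]) = (0::'k::field)"
proof -
  define b where "b = xs ! (k - 1)"
  define x1 where "x1 = xs[k := (b + 1) mod 5]"
  define x2 where "x2 = xs[k := (b + 2) mod 5]"
  have x1: "x1 ! (k - 1) = b" "x1 ! k = (b + 1) mod 5" "x1 ! Suc k = (b + 3) mod 5"
    and x2: "x2 ! (k - 1) = b" "x2 ! k = (b + 2) mod 5"
    using l k jump by (simp_all add: x1_def x2_def b_def)
  have x2_eq: "x2 = x1[k := (b + 2) mod 5]" and x1_eq: "x1 = x2[k := (b + 1) mod 5]"
    by (simp_all add: x1_def x2_def)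
  have x1_range: "x1 = skip_path a n (Suc k) \<and> x2 = skip_path a n k"
    if range: "x1 \<in> skip_path a n ` {1..n}"
  proof -
    obtain j where j: "x1 = skip_path a n j" using range by blast
    have long: "x1 ! Suc k = (x1 ! k + 2) mod 5" using x1 by (simp add: mod_simps add.commute)
    then have "j = Suc k" using skip_path_long_step_iff[OF k(2), of a j] j by simp
    moreover have "x2 = x1[k := (x1 ! (k - 1) + 2) mod 5]" by (simp only: x2_eq x1(1))
    ultimately show ?thesis using skip_path_swap_left[OF k, of a j] long j by simp
  qed
  have x2_range: "x1 \<in> skip_path a n ` {1..n}" if range: "x2 \<in> skip_path a n ` {1..n}"
  proof -
    obtain j where j: "x2 = skip_path a n j" using range by blast
    have "x1 = x2[k := (x2 ! (k - 1) + 1) mod 5]" by (simp only: x1_eq x2(1))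
    then have "x1 = skip_path a n (Suc k)" using skip_path_swap_right[OF k, of a j] x2 j by simp
    then show ?thesis using k by auto
  qed
  have "beta_path a n x1 + beta_path a n x2 = (0::'k)"
  proof (cases "x1 \<in> skip_path a n ` {1..n}")
    case True
    then have "x1 = skip_path a n (Suc k)" "x2 = skip_path a n k" using x1_range by auto
    then have "beta_path a n x1 = ((-1) ^ (n - Suc k) :: 'k)" "beta_path a n x2 = ((-1) ^ (n - k) :: 'k)"
      using k by (simp_all add: beta_path_apply_skip_path)
    moreover have "n - k = Suc (n - Suc k)" using k by simp
    ultimately show ?thesis by simp
  next
    case False
    moreover from this have "x2 \<notin> skip_path a n ` {1..n}" using x2_range by blast
    ultimately show ?thesis by (simp add: beta_path_apply_other)
  qed
  then show ?thesis by (simp add: x1_def x2_def b_def)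
qed

lemma beta_path_in_Omega:
  assumes n: "1 \<le> n"
  shows "(beta_path a n :: nat list \<Rightarrow> 'k::field) \<in> Omega V5 E5 n"
proof (cases "n = 1")
  case True
  then show ?thesis using beta_path_in_A_space by (simp add: Omega_def)
next
  case False
  show ?thesis
  proof (rule OmegaI_E5)
    show "2 \<le> n" using False n by simp
    show "beta_path a n \<in> A_space V5 E5 n" by (rule beta_path_in_A_space)
  next
    fix xs :: "nat list" and k
    assume k: "0 < k" "k < n" and jump: "xs ! Suc k = (xs ! (k - 1) + 4) mod 5"
    show "beta_path a n xs = (0::'k)" by (rule beta_path_jump_four_eq_0[OF k jump])
  next
    fix xs :: "nat list" and k assume xs: "xs \<in> elem_paths V5 n" and k: "0 < k" "k < n"
      and jump: "xs ! Suc k = (xs ! (k - 1) + 3) mod 5"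
    show "beta_path a n (xs[k := (xs ! (k - 1) + 1) mod 5])
        + beta_path a n (xs[k := (xs ! (k - 1) + 2) mod 5]) = (0::'k)"
      by (rule beta_path_jump_three_sum_eq_0[OF _ k jump]) (use xs in \<open>simp add: elem_paths_def\<close>)
  qed
qed

lemma Omega_E5_no_two_long_steps:
  fixes u :: "nat list \<Rightarrow> 'k::field"
  assumes u: "u \<in> Omega V5 E5 n"
  shows "xs \<in> elem_paths V5 n \<Longrightarrow> allowed_path E5 xs \<Longrightarrow> p < q \<Longrightarrow> q < n
    \<Longrightarrow> xs ! Suc p = (xs ! p + 2) mod 5 \<Longrightarrow> xs ! Suc q = (xs ! q + 2) mod 5 \<Longrightarrow> u xs = 0"
proof (induction q arbitrary: xs)
  case 0
  then show ?case by simp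
next
  case (Suc q)
  have l: "length xs = Suc n" using Suc.prems(1) by (simp add: elem_paths_def)
  have k: "0 < Suc q" "Suc q < n" using Suc.prems(4) by simp_all
  have "(xs ! q, xs ! Suc q) \<in> E5" using Suc.prems(2,4) l unfolding allowed_path_def by simp
  then have step: "xs ! Suc q = (xs ! q + 1) mod 5 \<or> xs ! Suc q = (xs ! q + 2) mod 5"
    unfolding E5_iff by blast
  consider (adjacent) "p = q" | (long) "p < q" "xs ! Suc q = (xs ! q + 2) mod 5"
    | (short) "p < q" "xs ! Suc q = (xs ! q + 1) mod 5"
    using Suc.prems(3) step by linarith
  then show ?case
  proof cases
    case adjacent
    have "xs ! Suc (Suc q) = (xs ! (Suc q - 1) + 4) mod 5"
      using Suc.prems(5,6) adjacent by (simp add: mod_simps add.commute)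
    then show ?thesis by (rule Omega_E5_jump_four_eq_0[OF u Suc.prems(1,2) k])
  next
    case long
    then show ?thesis using Suc.IH[OF Suc.prems(1,2) long(1) _ Suc.prems(5)] k by simp
  next
    case short
    txt \<open>Swapping the steps +1, +2 at q, Suc q moves the later long step one place left.\<close>
    define xs' where "xs' = xs[Suc q := (xs ! q + 2) mod 5]"
    have jump: "xs ! Suc (Suc q) = (xs ! (Suc q - 1) + 3) mod 5"
      using Suc.prems(6) short(2) by (simp add: mod_simps add.commute)
    have xs': "xs' \<in> elem_paths V5 n" "allowed_path E5 xs'"
      using allowed_E5_swap_steps[OF Suc.prems(1,2) k jump] by (simp_all add: xs'_def)
    have "u xs + u xs' = 0"
      using Omega_E5_jump_three_sum_eq_0[OF u Suc.prems(1,2) k jump] short(2) list_update_id[of xs "Suc q"]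
      by (simp add: xs'_def)
    moreover have "u xs' = 0"
      by (rule Suc.IH[OF xs' short(1)]) (use Suc.prems(5) short(1) l k in \<open>simp_all add: xs'_def\<close>)
    ultimately show ?thesis by simp
  qed
qed

lemma Omega_E5_support:
  fixes u :: "nat list \<Rightarrow> 'k::field"
  assumes u: "u \<in> Omega V5 E5 n" and nz: "u xs \<noteq> 0"
  shows "xs = straight_path (xs ! 0) n \<or> (\<exists>j\<in>{1..n}. xs = skip_path (xs ! 0) n j)"
proof -
  note xs = A_space_support[OF Omega_imp_A_space[OF u] nz]
  have l: "length xs = Suc n" using xs(1) by (simp add: elem_paths_def)
  have a5: "xs ! 0 < 5" using nth_elem_paths[OF xs(1), of 0] by (simp add: circ_V_def)
  have step: "xs ! Suc m = (xs ! m + 1) mod 5 \<or> xs ! Suc m = (xs ! m + 2) mod 5" if "m < n" for m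
  proof -
    have "(xs ! m, xs ! Suc m) \<in> E5" using xs(2) l that unfolding allowed_path_def by simp
    then show ?thesis unfolding E5_iff by blast
  qed
  show ?thesis
  proof (cases "\<exists>p<n. xs ! Suc p = (xs ! p + 2) mod 5")
    case True
    then obtain p where p: "p < n" "xs ! Suc p = (xs ! p + 2) mod 5" by blast
    have long_iff: "xs ! Suc m = (xs ! m + 2) mod 5 \<longleftrightarrow> m = p" if "m < n" for m
      using Omega_E5_no_two_long_steps[OF u xs, of m p] Omega_E5_no_two_long_steps[OF u xs, of p m]
        p that nz by (cases m p rule: linorder_cases) auto
    have "xs = skip_path (xs ! 0) n (Suc p)"
    proof (rule nth_equality_by_recurrence[where f = "\<lambda>m x. (x + (if Suc m = Suc p then 2 else 1)) mod 5"])
      show "xs ! Suc m = (xs ! m + (if Suc m = Suc p then 2 else 1)) mod 5" if "m < n" for m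
        using step[OF that] long_iff[OF that] by auto
    qed (simp_all add: l head_skip_path a5 skip_path_step)
    then show ?thesis using p(1) by auto
  next
    case False
    have "xs = straight_path (xs ! 0) n"
    proof (rule nth_equality_by_recurrence[where f = "\<lambda>m x. (x + 1) mod 5"])
      show "xs ! Suc m = (xs ! m + 1) mod 5" if "m < n" for m
        using step[OF that] False that by auto
    qed (simp_all add: l head_straight_path a5 straight_path_step)
    then show ?thesis by simp
  qed
qed

lemma Omega_E5_skip_path_Suc_add:
  fixes u :: "nat list \<Rightarrow> 'k::field"
  assumes u: "u \<in> Omega V5 E5 n" and j: "0 < j" "j < n"
  shows "u (skip_path a n (Suc j)) + u (skip_path a n j) = 0"
proof -
  let ?xs = "skip_path a n (Suc j)"
  have jump: "?xs ! Suc j = (?xs ! (j - 1) + 3) mod 5" using skip_path_two_steps[OF j] by simp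
  have "?xs ! j = (?xs ! (j - 1) + 1) mod 5" using skip_path_step[of "j - 1" n a "Suc j"] j by simp
  then have "?xs[j := (?xs ! (j - 1) + 1) mod 5] = ?xs" by (metis list_update_id)
  moreover have "?xs[j := (?xs ! (j - 1) + 2) mod 5] = skip_path a n j"
    using skip_path_swap_left[OF j] skip_path_long_step_iff[OF j(2), of a "Suc j"] by simp
  ultimately show ?thesis
    using Omega_E5_jump_three_sum_eq_0[OF u elem_paths_skip_path allowed_skip_path j jump] by simp
qed

lemma Omega_E5_skip_path_eq:
  fixes u :: "nat list \<Rightarrow> 'k::field"
  assumes u: "u \<in> Omega V5 E5 n"
  shows "j \<in> {1..n} \<Longrightarrow> u (skip_path a n j) = (-1) ^ (n - j) * u (skip_path a n n)"
proof (induction "n - j" arbitrary: j)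
  case 0
  then show ?case by simp
next
  case (Suc d)
  then have j: "0 < j" "j < n" by auto
  have "u (skip_path a n j) = - u (skip_path a n (Suc j))"
    using Omega_E5_skip_path_Suc_add[OF u j] by (simp add: eq_neg_iff_add_eq_0 add.commute)
  also have "\<dots> = (-1) ^ (n - j) * u (skip_path a n n)"
    using Suc.hyps(1)[of "Suc j"] Suc.hyps(2) j by (simp add: Suc_diff_Suc[symmetric])
  finally show ?case .
qed

lemma alpha_path_at_straight_path:
  "a < 5 \<Longrightarrow> a' < 5 \<Longrightarrow> alpha_path a n (straight_path a' n) = (if a = a' then 1 else 0)"
  using head_straight_path[of a n] head_straight_path[of a' n] by (auto simp: alpha_path_apply)

lemma alpha_path_at_skip_path: "a < 5 \<Longrightarrow> j \<in> {1..n} \<Longrightarrow> alpha_path a n (skip_path a' n j) = 0"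
  using straight_path_ne_skip_path[of j n a a'] by (simp add: alpha_path_apply)

lemma beta_path_at_straight_path: "beta_path a n (straight_path a' n) = 0"
  by (rule beta_path_apply_other) (use straight_path_ne_skip_path in blast)

lemma beta_path_at_skip_path:
  assumes "a < 5" "a' < 5" "j \<in> {1..n}"
  shows "(beta_path a n (skip_path a' n j) :: 'k::field) = (if a = a' then (-1) ^ (n - j) else 0)"
proof (cases "a = a'")
  case True
  then show ?thesis by (simp add: beta_path_apply_skip_path[OF assms(3)])
next
  case False
  have "skip_path a' n j \<notin> skip_path a n ` {1..n}"
  proof
    assume "skip_path a' n j \<in> skip_path a n ` {1..n}"
    then obtain j' where j': "j' \<in> {1..n}" "skip_path a' n j = skip_path a n j'" by blast
    then have "skip_path a' n j ! 0 = skip_path a n j' ! 0" by simp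
    then show False
      using head_skip_path[OF assms(1), of j' n] head_skip_path[OF assms(2), of j n] assms(3) j'(1) False
      by simp
  qed
  then show ?thesis using False by (simp add: beta_path_apply_other)
qed

lemma Omega_E5_expansion:
  fixes u :: "nat list \<Rightarrow> 'k::field"
  assumes u: "u \<in> Omega V5 E5 n"
  shows "u = (\<Sum>a<5. fscale (u (straight_path a n)) (alpha_path a n))
    + (\<Sum>a<5. fscale (u (skip_path a n n)) (beta_path a n))"
proof
  fix xs
  have rhs: "((\<Sum>a<5. fscale (u (straight_path a n)) (alpha_path a n))
      + (\<Sum>a<5. fscale (u (skip_path a n n)) (beta_path a n))) xs
    = (\<Sum>a<5. u (straight_path a n) * alpha_path a n xs) + (\<Sum>a<5. u (skip_path a n n) * beta_path a n xs)"
    by (simp add: sum_fun_apply fscale_def)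
  consider (straight) a0 where "a0 < 5" "xs = straight_path a0 n"
    | (skip) a0 j where "a0 < 5" "j \<in> {1..n}" "xs = skip_path a0 n j"
    | (other) "u xs = 0" "\<forall>a<5. xs \<noteq> straight_path a n" "\<forall>a<5. xs \<notin> skip_path a n ` {1..n}"
  proof (cases "u xs = 0")
    case False
    then have "xs ! 0 < 5"
      using Omega_imp_A_space[OF u] nth_elem_paths[of xs V5 n 0]
      by (auto simp: A_space_def R_space_def circ_V_def)
    then show thesis using Omega_E5_support[OF u False] that(1,2) by blast
  qed (use that(3) in blast)
  then show "u xs = ((\<Sum>a<5. fscale (u (straight_path a n)) (alpha_path a n))
      + (\<Sum>a<5. fscale (u (skip_path a n n)) (beta_path a n))) xs"
  proof cases
    case straight
    then show ?thesis
      unfolding rhs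
      by (simp add: alpha_path_at_straight_path beta_path_at_straight_path if_distrib cong: if_cong)
  next
    case skip
    then show ?thesis
      unfolding rhs using Omega_E5_skip_path_eq[OF u skip(2), of a0]
      by (simp add: alpha_path_at_skip_path beta_path_at_skip_path if_distrib mult.commute cong: if_cong)
  next
    case other
    then show ?thesis
      unfolding rhs by (simp add: alpha_path_apply beta_path_apply_other)
  qed
qed

lemma independent_if_dual_points:
  fixes B :: "('a \<Rightarrow> 'k::field) set"
  assumes dual: "\<And>b. b \<in> B \<Longrightarrow> \<exists>x. b x \<noteq> 0 \<and> (\<forall>b'\<in>B. b' \<noteq> b \<longrightarrow> b' x = 0)"
  shows "\<not> module.dependent fscale B"
proof
  interpret vector_space "fscale :: 'k \<Rightarrow> ('a \<Rightarrow> 'k) \<Rightarrow> _" by (rule vector_space_fscale)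
  assume "dependent B"
  then obtain T c v where T: "finite T" "T \<subseteq> B" and v: "v \<in> T" "c v \<noteq> 0"
    and sum: "(\<Sum>w\<in>T. fscale (c w) w) = 0"
    unfolding dependent_explicit by blast
  obtain x where x: "v x \<noteq> 0" "\<forall>w\<in>B. w \<noteq> v \<longrightarrow> w x = 0" using dual v(1) T(2) by blast
  have "0 = (\<Sum>w\<in>T. fscale (c w) w) x" using sum by simp
  also have "\<dots> = c v * v x + (\<Sum>w\<in>T - {v}. c w * w x)"
    by (simp add: sum_fun_apply fscale_def sum.remove[OF T(1) v(1)])
  also have "(\<Sum>w\<in>T - {v}. c w * w x) = 0" using x(2) T(2) by (intro sum.neutral) auto
  finally show False using v(2) x(1) by simp
qed

definition alpha_beta_basis :: "nat \<Rightarrow> (nat list \<Rightarrow> 'k::field) set" where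
  "alpha_beta_basis n = {alpha_path a n | a. a < 5} \<union> {beta_path a n | a. a < 5}"

lemma card_alpha_beta_basis:
  assumes n: "1 \<le> n"
  shows "card (alpha_beta_basis n :: (nat list \<Rightarrow> 'k::field) set) = 10"
proof -
  have n_in: "n \<in> {1..n}" using n by simp
  have eq: "alpha_beta_basis n
      = (\<lambda>a. alpha_path a n) ` {..<5} \<union> (\<lambda>a. beta_path a n :: nat list \<Rightarrow> 'k) ` {..<5}"
    by (auto simp: alpha_beta_basis_def)
  have "inj_on (\<lambda>a. alpha_path a n :: nat list \<Rightarrow> 'k) {..<5}"
  proof (rule inj_onI)
    fix a a' assume a: "a \<in> {..<5}" "a' \<in> {..<5}"
      and eq: "(alpha_path a n :: nat list \<Rightarrow> 'k) = alpha_path a' n"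
    have "(alpha_path a n (straight_path a n) :: 'k) = alpha_path a' n (straight_path a n)"
      by (simp add: eq)
    then show "a = a'" using a by (simp add: alpha_path_at_straight_path split: if_splits)
  qed
  moreover have "inj_on (\<lambda>a. beta_path a n :: nat list \<Rightarrow> 'k) {..<5}"
  proof (rule inj_onI)
    fix a a' assume a: "a \<in> {..<5}" "a' \<in> {..<5}"
      and eq: "(beta_path a n :: nat list \<Rightarrow> 'k) = beta_path a' n"
    have "(beta_path a n (skip_path a n n) :: 'k) = beta_path a' n (skip_path a n n)"
      by (simp add: eq)
    then show "a = a'" using a n_in by (simp add: beta_path_at_skip_path split: if_splits)
  qed
  moreover have "(\<lambda>a. alpha_path a n) ` {..<5} \<inter> (\<lambda>a. beta_path a n :: nat list \<Rightarrow> 'k) ` {..<5} = {}"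
  proof (rule ccontr)
    assume "\<not> ?thesis"
    then obtain a a' where a: "a < 5" and eq: "(alpha_path a n :: nat list \<Rightarrow> 'k) = beta_path a' n"
      by auto
    have "(alpha_path a n (straight_path a n) :: 'k) = beta_path a' n (straight_path a n)"
      by (simp add: eq)
    then show False using a by (simp add: alpha_path_at_straight_path beta_path_at_straight_path)
  qed
  ultimately show ?thesis unfolding eq by (simp add: card_Un_disjoint card_image)
qed

lemma alpha_beta_basis_subset_Omega: "1 \<le> n \<Longrightarrow> alpha_beta_basis n \<subseteq> Omega V5 E5 n"
  unfolding alpha_beta_basis_def using alpha_path_in_Omega beta_path_in_Omega by blast

lemma independent_alpha_beta_basis:
  assumes n: "1 \<le> n"
  shows "\<not> module.dependent fscale (alpha_beta_basis n :: (nat list \<Rightarrow> 'k::field) set)"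
proof (rule independent_if_dual_points)
  have n_in: "n \<in> {1..n}" using n by simp
  fix b :: "nat list \<Rightarrow> 'k" assume "b \<in> alpha_beta_basis n"
  then consider a where "a < 5" "b = alpha_path a n" | a where "a < 5" "b = beta_path a n"
    unfolding alpha_beta_basis_def by blast
  then show "\<exists>x. b x \<noteq> 0 \<and> (\<forall>b'\<in>alpha_beta_basis n. b' \<noteq> b \<longrightarrow> b' x = 0)"
  proof cases
    case 1
    then show ?thesis unfolding alpha_beta_basis_def
      by (intro exI[of _ "straight_path a n"])
        (auto simp: alpha_path_at_straight_path beta_path_at_straight_path)
  next
    case 2
    then show ?thesis unfolding alpha_beta_basis_def using n_in
      by (intro exI[of _ "skip_path a n n"])
        (auto simp: alpha_path_at_skip_path beta_path_at_skip_path)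
  qed
qed

lemma span_alpha_beta_basis:
  assumes n: "1 \<le> n"
  shows "module.span fscale (alpha_beta_basis n) = (Omega V5 E5 n :: (nat list \<Rightarrow> 'k::field) set)"
proof -
  interpret vector_space "fscale :: 'k \<Rightarrow> (nat list \<Rightarrow> 'k) \<Rightarrow> _" by (rule vector_space_fscale)
  have "span (alpha_beta_basis n) \<subseteq> Omega V5 E5 n"
    by (rule span_minimal[OF alpha_beta_basis_subset_Omega[OF n] subspace_Omega])
  moreover have "u \<in> span (alpha_beta_basis n)" if u: "u \<in> Omega V5 E5 n" for u
  proof (subst Omega_E5_expansion[OF u])
    show "(\<Sum>a<5. fscale (u (straight_path a n)) (alpha_path a n))
        + (\<Sum>a<5. fscale (u (skip_path a n n)) (beta_path a n)) \<in> span (alpha_beta_basis n)"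
      by (intro span_add span_sum span_scale span_base) (auto simp: alpha_beta_basis_def)
  qed
  ultimately show ?thesis by blast
qed

theorem mainTheorem1:
  fixes n :: nat
  assumes "n \<ge> 1"
  defines "B \<equiv> {alpha_path a n | a. a < 5} \<union> {beta_path a n | a. a < 5}
                 :: (nat list \<Rightarrow> 'k::field_char_0) set"
  shows "vector_space.dim fscale (Omega (circ_V 5) (circ_E 5 {1, 2}) n :: (nat list \<Rightarrow> 'k) set) = 10
    \<and> card B = 10
    \<and> B \<subseteq> Omega (circ_V 5) (circ_E 5 {1, 2}) n
    \<and> \<not> module.dependent fscale B
    \<and> module.span fscale B = Omega (circ_V 5) (circ_E 5 {1, 2}) n"
proof -
  interpret vector_space "fscale :: 'k \<Rightarrow> (nat list \<Rightarrow> 'k) \<Rightarrow> _" by (rule vector_space_fscale)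
  have B: "B = alpha_beta_basis n" by (simp add: B_def alpha_beta_basis_def)
  have indep: "\<not> dependent B" using independent_alpha_beta_basis[OF assms(1)] B by simp
  have span: "span B = Omega V5 E5 n" using span_alpha_beta_basis[OF assms(1)] B by simp
  have card: "card B = 10" using card_alpha_beta_basis[OF assms(1)] B by simp
  have "dim (Omega V5 E5 n) = 10" using dim_span_eq_card_independent[OF indep] span card by simp
  then show ?thesis using card span indep alpha_beta_basis_subset_Omega[OF assms(1)] B by simp
qed

end
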